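(* Let $X$ be a finite set, $f:X\to X$ a function, and consider the iterative generator $\mathcal G$ with state sequences $\mathcal G(s)=(x_0=s,x_1,x_2,\dots)$, $x_i=f(x_{i-1})$ for $i\ge 1$, $s\in X$. (1) For every seed $s\in X$, the state sequence $\vec x=\mathcal G(s)$ satisfies $\mathcal D_{\vec x}(k)=\min\{k,p\}$ for all $k\ge 1$, where $p$ is the length of the cycle that $\vec x$ eventually enters. (2) $\mathcal D_{\mathcal G}(k)=\min\{k,p\}$ for all $k\ge1$, where $p$ is the length of the shortest cycle of $f$ (i.e. the least $p\ge1$ such that $f^p(x)=x$ for some $x\in X$).
   Context: The diversity of a sequence $\vec x=(x_0,x_1,\dots)$ is the function $\mathcal D_{\vec x}(k)$, $k=1,2,\dots$, defined as the minimum, over all $i\ge 0$, of the number of distinct values among $x_i,x_{i+1},\dots,x_{i+k-1}$. The diversity of the generator is $\mathcal D_{\mathcal G}(k)=\min\{\mathcal D_{\mathcal G(s)}(k): s\in X\}$. Since $X$ is finite, every state sequence is eventually periodic, i.e. it eventually enters a cycle of $f$. *)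

theory Defs
  imports Main
begin

definition window_card :: "(nat \<Rightarrow> 'a) \<Rightarrow> nat \<Rightarrow> nat \<Rightarrow> nat" where
  "window_card x k i = card {x (i + j) | j. j < k}"

definition seq_diversity :: "(nat \<Rightarrow> 'a) \<Rightarrow> nat \<Rightarrow> nat" where
  "seq_diversity x k = Min (range (window_card x k))"

definition state_seq :: "('a \<Rightarrow> 'a) \<Rightarrow> 'a \<Rightarrow> nat \<Rightarrow> 'a" where
  "state_seq f s i = (f ^^ i) s"

definition gen_diversity :: "('a::finite \<Rightarrow> 'a) \<Rightarrow> nat \<Rightarrow> nat" where
  "gen_diversity f k = Min ((\<lambda>s. seq_diversity (state_seq f s) k) ` UNIV)"

definition eventual_cycle_length :: "('a \<Rightarrow> 'a) \<Rightarrow> 'a \<Rightarrow> nat" where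
  "eventual_cycle_length f s = (LEAST p. 1 \<le> p \<and> (\<exists>i. (f ^^ p) (state_seq f s i) = state_seq f s i))"

definition shortest_cycle_length :: "('a \<Rightarrow> 'a) \<Rightarrow> nat" where
  "shortest_cycle_length f = (LEAST p. 1 \<le> p \<and> (\<exists>x. (f ^^ p) x = x))"

end

theory Submission
  imports Defs
begin

text \<open>Let \<open>p\<close> be the eventual cycle length of the sequence \<open>x\<close> generated from \<open>s\<close>.
  If \<open>x a = x b\<close> with \<open>a < b\<close>, then \<open>f ^^ (b - a)\<close> fixes a state of the sequence, so
  \<open>b - a \<ge> p\<close> by minimality of \<open>p\<close>; hence the first \<open>min k p\<close> entries of every window are
  distinct. Conversely, once the sequence is on its cycle it is periodic with period \<open>p\<close>,
  so a window starting there shows at most \<open>min k p\<close> values. For the generator, \<open>min k\<close> is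
  monotone, so it remains to see that the least eventual cycle length over all seeds is
  the shortest cycle length: every eventual cycle is a cycle of \<open>f\<close>, and a seed lying on
  a shortest cycle attains it.\<close>

lemma window_card_eq_card_image: "window_card x k i = card ((\<lambda>j. x (i + j)) ` {..<k})"
  unfolding window_card_def by (rule arg_cong[where f = card]) auto

lemma window_card_le: "window_card x k i \<le> k"
  unfolding window_card_eq_card_image using card_image_le[of "{..<k}"] by simp

lemma seq_diversity_eqI:
  assumes "\<And>i. d \<le> window_card x k i" and "window_card x k i\<^sub>0 \<le> d"
  shows "seq_diversity x k = d"
  unfolding seq_diversity_def
proof (rule Min_eqI)
  have "range (window_card x k) \<subseteq> {..k}"
    using window_card_le by blast
  then show "finite (range (window_card x k))"
    using finite_subset by blast
  show "d \<in> range (window_card x k)"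
    using assms order_antisym by blast
qed (use assms in auto)

lemma window_card_ge_if_gap:
  assumes gap: "\<And>a b. a < b \<Longrightarrow> x a = x b \<Longrightarrow> p \<le> b - a"
  shows "min k p \<le> window_card x k i"
proof -
  have "inj_on (\<lambda>j. x (i + j)) {..<min k p}"
  proof (rule inj_onI)
    fix a b
    assume "a \<in> {..<min k p}" "b \<in> {..<min k p}" "x (i + a) = x (i + b)"
    then show "a = b"
      using gap[of "i + a" "i + b"] gap[of "i + b" "i + a"]
      by (cases a b rule: linorder_cases) auto
  qed
  then have "min k p = card ((\<lambda>j. x (i + j)) ` {..<min k p})"
    by (simp add: card_image)
  also have "\<dots> \<le> window_card x k i"
    unfolding window_card_eq_card_image by (rule card_mono) auto
  finally show ?thesis .
qed

lemma window_card_le_period: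
  assumes "0 < p" and periodic: "\<And>j. x (i + j) = x (i + j mod p)"
  shows "window_card x k i \<le> p"
proof -
  have "(\<lambda>j. x (i + j)) ` {..<k} \<subseteq> (\<lambda>j. x (i + j)) ` {..<p}"
  proof (rule image_subsetI)
    show "x (i + j) \<in> (\<lambda>j. x (i + j)) ` {..<p}" for j
      using periodic[of j] \<open>0 < p\<close> by (intro image_eqI[of _ _ "j mod p"]) auto
  qed
  then have "window_card x k i \<le> card ((\<lambda>j. x (i + j)) ` {..<p})"
    unfolding window_card_eq_card_image by (rule card_mono[rotated]) simp
  also have "\<dots> \<le> p"
    using card_image_le[of "{..<p}"] by simp
  finally show ?thesis .
qed

lemma state_seq_add: "state_seq f s (i + j) = (f ^^ j) (state_seq f s i)"
  unfolding state_seq_def by (simp add: funpow_add add.commute[of i])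

lemma state_seq_returns:
  fixes f :: "'a::finite \<Rightarrow> 'a"
  shows "\<exists>p. 1 \<le> p \<and> (\<exists>i. (f ^^ p) (state_seq f s i) = state_seq f s i)"
proof -
  have "\<not> inj (state_seq f s)"
    using finite_imageD[of "state_seq f s" UNIV] by auto
  then obtain a b where "a < b" "state_seq f s a = state_seq f s b"
    unfolding inj_def by (metis linorder_neqE_nat)
  then have "(f ^^ (b - a)) (state_seq f s a) = state_seq f s a"
    using state_seq_add[of f s a "b - a"] by simp
  with \<open>a < b\<close> show ?thesis
    by (intro exI[of _ "b - a"]) auto
qed

lemma eventual_cycle_length_pos:
  fixes f :: "'a::finite \<Rightarrow> 'a"
  shows "1 \<le> eventual_cycle_length f s"
  unfolding eventual_cycle_length_def using LeastI_ex[OF state_seq_returns] by blast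

lemma eventual_cycle_length_cycle:
  fixes f :: "'a::finite \<Rightarrow> 'a"
  obtains i where "(f ^^ eventual_cycle_length f s) (state_seq f s i) = state_seq f s i"
  unfolding eventual_cycle_length_def using LeastI_ex[OF state_seq_returns] by blast

lemma eventual_cycle_length_le:
  "1 \<le> q \<Longrightarrow> (f ^^ q) (state_seq f s i) = state_seq f s i \<Longrightarrow> eventual_cycle_length f s \<le> q"
  unfolding eventual_cycle_length_def by (rule Least_le) auto

lemma eventual_cycle_length_le_gap:
  assumes "a < b" and "state_seq f s a = state_seq f s b"
  shows "eventual_cycle_length f s \<le> b - a"
proof (rule eventual_cycle_length_le)
  show "(f ^^ (b - a)) (state_seq f s a) = state_seq f s a"
    using assms state_seq_add[of f s a "b - a"] by simp
qed (use assms in simp)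

lemma state_seq_periodic:
  assumes "(f ^^ p) (state_seq f s i) = state_seq f s i"
  shows "state_seq f s (i + j) = state_seq f s (i + j mod p)"
  using funpow_mod_eq[OF assms, of j] by (simp add: state_seq_add)

lemma seq_diversity_state_seq:
  fixes f :: "'a::finite \<Rightarrow> 'a"
  shows "seq_diversity (state_seq f s) k = min k (eventual_cycle_length f s)"
proof -
  obtain i\<^sub>0 where cycle: "(f ^^ eventual_cycle_length f s) (state_seq f s i\<^sub>0) = state_seq f s i\<^sub>0"
    using eventual_cycle_length_cycle .
  have "0 < eventual_cycle_length f s"
    using eventual_cycle_length_pos[of f s] by simp
  show ?thesis
  proof (rule seq_diversity_eqI)
    show "min k (eventual_cycle_length f s) \<le> window_card (state_seq f s) k i" for i
      by (rule window_card_ge_if_gap) (rule eventual_cycle_length_le_gap)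
    show "window_card (state_seq f s) k i\<^sub>0 \<le> min k (eventual_cycle_length f s)"
      using window_card_le window_card_le_period[OF \<open>0 < _\<close> state_seq_periodic[OF cycle]]
      by simp
  qed
qed

lemma shortest_cycle_length_eq_Min:
  fixes f :: "'a::finite \<Rightarrow> 'a"
  shows "shortest_cycle_length f = Min (range (eventual_cycle_length f))"
proof -
  have le: "shortest_cycle_length f \<le> eventual_cycle_length f s" for s
  proof -
    obtain i where "(f ^^ eventual_cycle_length f s) (state_seq f s i) = state_seq f s i"
      using eventual_cycle_length_cycle .
    then show ?thesis
      unfolding shortest_cycle_length_def using eventual_cycle_length_pos
      by (intro Least_le) blast
  qed
  obtain y where "1 \<le> shortest_cycle_length f" "(f ^^ shortest_cycle_length f) y = y"
    using LeastI_ex[of "\<lambda>p. 1 \<le> p \<and> (\<exists>x. (f ^^ p) x = x)"] state_seq_returns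
    unfolding shortest_cycle_length_def by blast
  then have "eventual_cycle_length f y \<le> shortest_cycle_length f"
    using eventual_cycle_length_le[of _ f y 0] by (simp add: state_seq_def)
  with le[of y] have "shortest_cycle_length f \<in> range (eventual_cycle_length f)"
    by (metis order_antisym rangeI)
  with le show ?thesis
    by (intro Min_eqI[symmetric]) auto
qed

lemma gen_diversity_eq:
  fixes f :: "'a::finite \<Rightarrow> 'a"
  shows "gen_diversity f k = min k (Min (range (eventual_cycle_length f)))"
proof -
  have "gen_diversity f k = Min (min k ` range (eventual_cycle_length f))"
    unfolding gen_diversity_def seq_diversity_state_seq image_image ..
  also have "\<dots> = min k (Min (range (eventual_cycle_length f)))"
    by (rule mono_Min_commute[symmetric]) (auto simp: mono_def)
  finally show ?thesis .
qed

theorem mainTheorem1: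
  fixes f :: "'a::finite \<Rightarrow> 'a"
  shows "(\<forall>s k. 1 \<le> k \<longrightarrow>
            seq_diversity (state_seq f s) k = min k (eventual_cycle_length f s))
       \<and> (\<forall>k. 1 \<le> k \<longrightarrow> gen_diversity f k = min k (shortest_cycle_length f))"
  by (simp add: seq_diversity_state_seq gen_diversity_eq shortest_cycle_length_eq_Min)

end
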